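(* Let $0\le \underline c_{ii}<\overline c_{ii}$, $0\le \underline c_{jj}<\overline c_{jj}$, $\underline c_{ij}<\overline c_{ij}$, $\underline s_{ij}<\overline s_{ij}$ be real numbers and let $\mathcal{D}_{ij}=[\underline c_{ii},\overline c_{ii}]\times[\underline c_{jj},\overline c_{jj}]\times[\underline c_{ij},\overline c_{ij}]\times[\underline s_{ij},\overline s_{ij}]\subset\mathbb{R}^4$, with points written $z=(c_{ii},c_{jj},c_{ij},s_{ij})$. Define $\mathcal{K}^{=}=\{z\in\mathcal{D}_{ij}: c_{ij}^2+s_{ij}^2=c_{ii}c_{jj}\}$, $\mathcal{K}^{\le}=\{z\in\mathcal{D}_{ij}: c_{ij}^2+s_{ij}^2\le c_{ii}c_{jj}\}$ and $G=\{z\in\mathbb{R}^4: c_{ij}^2+s_{ij}^2\ge c_{ii}c_{jj}\}$. Let $V$ be the (finite) set of all points $z$ such that, for some one-dimensional face (edge) $E$ of the hypercube $\mathcal{D}_{ij}$ (i.e. a segment obtained by fixing three of the four coordinates at one of their bounds), $z$ is an extreme point of $\operatorname{conv}(E\cap G)$. Then $$\operatorname{conv}(\mathcal{K}^{=})=\mathcal{K}^{\le}\cap\operatorname{conv}(V)=\Big\{z\in\mathcal{D}_{ij}:\ \exists\lambda\ge 0,\ c_{ij}^2+s_{ij}^2\le c_{ii}c_{jj},\ z=\sum_{k=1}^K\lambda_k z^k,\ \sum_{k=1}^K\lambda_k=1\Big\},$$ where $z^1,\dots,z^K$ is an enumeration of $V$ (so $K\le 32\cdot 2$ is finite). *)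

theory Defs
  imports "HOL-Analysis.Analysis"
begin

type_synonym pt4 = "real \<times> real \<times> real \<times> real"

definition box4 :: "real \<Rightarrow> real \<Rightarrow> real \<Rightarrow> real \<Rightarrow> real \<Rightarrow> real \<Rightarrow> real \<Rightarrow> real \<Rightarrow> pt4 set" where
  "box4 l1 u1 l2 u2 l3 u3 l4 u4 = {l1..u1} \<times> {l2..u2} \<times> {l3..u3} \<times> {l4..u4}"

definition Gset :: "pt4 set" where
  "Gset = {(cii, cjj, cij, sij). cij\<^sup>2 + sij\<^sup>2 \<ge> cii * cjj}"

definition Keq :: "real \<Rightarrow> real \<Rightarrow> real \<Rightarrow> real \<Rightarrow> real \<Rightarrow> real \<Rightarrow> real \<Rightarrow> real \<Rightarrow> pt4 set" where
  "Keq l1 u1 l2 u2 l3 u3 l4 u4 =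
     {z \<in> box4 l1 u1 l2 u2 l3 u3 l4 u4. case z of (cii, cjj, cij, sij) \<Rightarrow> cij\<^sup>2 + sij\<^sup>2 = cii * cjj}"

definition Kle :: "real \<Rightarrow> real \<Rightarrow> real \<Rightarrow> real \<Rightarrow> real \<Rightarrow> real \<Rightarrow> real \<Rightarrow> real \<Rightarrow> pt4 set" where
  "Kle l1 u1 l2 u2 l3 u3 l4 u4 =
     {z \<in> box4 l1 u1 l2 u2 l3 u3 l4 u4. case z of (cii, cjj, cij, sij) \<Rightarrow> cij\<^sup>2 + sij\<^sup>2 \<le> cii * cjj}"

definition edges4 :: "real \<Rightarrow> real \<Rightarrow> real \<Rightarrow> real \<Rightarrow> real \<Rightarrow> real \<Rightarrow> real \<Rightarrow> real \<Rightarrow> pt4 set set" where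
  "edges4 l1 u1 l2 u2 l3 u3 l4 u4 =
     {{l1..u1} \<times> {b} \<times> {c} \<times> {d} | b c d. b \<in> {l2, u2} \<and> c \<in> {l3, u3} \<and> d \<in> {l4, u4}} \<union>
     {{a} \<times> {l2..u2} \<times> {c} \<times> {d} | a c d. a \<in> {l1, u1} \<and> c \<in> {l3, u3} \<and> d \<in> {l4, u4}} \<union>
     {{a} \<times> {b} \<times> {l3..u3} \<times> {d} | a b d. a \<in> {l1, u1} \<and> b \<in> {l2, u2} \<and> d \<in> {l4, u4}} \<union>
     {{a} \<times> {b} \<times> {c} \<times> {l4..u4} | a b c. a \<in> {l1, u1} \<and> b \<in> {l2, u2} \<and> c \<in> {l3, u3}}"

definition Vset :: "real \<Rightarrow> real \<Rightarrow> real \<Rightarrow> real \<Rightarrow> real \<Rightarrow> real \<Rightarrow> real \<Rightarrow> real \<Rightarrow> pt4 set" where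
  "Vset l1 u1 l2 u2 l3 u3 l4 u4 =
     {z. \<exists>E \<in> edges4 l1 u1 l2 u2 l3 u3 l4 u4. z extreme_point_of (convex hull (E \<inter> Gset))}"

end

theory Submission
  imports Defs
begin

text \<open>Write \<open>quad (c\<^sub>i\<^sub>i, c\<^sub>j\<^sub>j, c\<^sub>i\<^sub>j, s\<^sub>i\<^sub>j) = c\<^sub>i\<^sub>j\<^sup>2 + s\<^sub>i\<^sub>j\<^sup>2 - c\<^sub>i\<^sub>i c\<^sub>j\<^sub>j\<close> and \<open>D\<close> for the box.
  Where \<open>c\<^sub>i\<^sub>i, c\<^sub>j\<^sub>j \<ge> 0\<close>, the set \<open>quad \<le> 0\<close> is a rotated second-order cone, so \<open>K\<^sup>\<le>\<close> is convex
  and contains \<open>conv K\<^sup>=\<close>. The heart of the proof is \<open>conv V = conv (D \<inter> G)\<close>: by Krein-Milman it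
  suffices that every extreme point of \<open>conv (D \<inter> G)\<close> lies on an edge of \<open>D\<close>. At a point of
  \<open>D \<inter> G\<close> with two coordinates strictly inside their intervals there is a nonzero direction in the
  plane of these coordinates along which \<open>quad\<close> has zero derivative and nonnegative curvature, so
  the point is the midpoint of a segment in \<open>D \<inter> G\<close>. Conversely, a point \<open>z\<close> of \<open>K\<^sup>\<le>\<close> lying in
  \<open>conv (D \<inter> G)\<close> is a convex combination of points \<open>g\<close> with \<open>quad g \<ge> 0\<close>; moving each \<open>g\<close> towards
  \<open>z\<close> until \<open>quad\<close> vanishes and reweighting exhibits \<open>z\<close> as a convex combination of points of
  \<open>K\<^sup>=\<close>. Finally \<open>V\<close> is finite since a convex subset of a segment has at most two extreme points.\<close>

definition quad :: "pt4 \<Rightarrow> real" where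
  "quad = (\<lambda>(a, b, x, y). x\<^sup>2 + y\<^sup>2 - a * b)"

lemma quad_apply [simp]: "quad (a, b, x, y) = x\<^sup>2 + y\<^sup>2 - a * b"
  by (simp add: quad_def)

lemma continuous_on_quad: "continuous_on S quad"
  unfolding quad_def case_prod_unfold by (intro continuous_intros)

lemma Gset_eq_quad: "Gset = {z. 0 \<le> quad z}"
  by (auto simp: Gset_def)

lemma Keq_eq_quad: "Keq l1 u1 l2 u2 l3 u3 l4 u4 = box4 l1 u1 l2 u2 l3 u3 l4 u4 \<inter> {z. quad z = 0}"
  by (auto simp: Keq_def)

lemma Kle_eq_quad: "Kle l1 u1 l2 u2 l3 u3 l4 u4 = box4 l1 u1 l2 u2 l3 u3 l4 u4 \<inter> {z. quad z \<le> 0}"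
  by (auto simp: Kle_def)

lemma closed_Gset: "closed Gset"
  unfolding Gset_eq_quad by (intro closed_Collect_le continuous_on_const continuous_on_quad)

lemma convex_box4: "convex (box4 l1 u1 l2 u2 l3 u3 l4 u4)"
  unfolding box4_def by (intro convex_Times convex_real_interval)

lemma compact_box4: "compact (box4 l1 u1 l2 u2 l3 u3 l4 u4)"
  unfolding box4_def by (intro compact_Times compact_Icc)

lemma sum_squares_le_mult_iff_norm:
  fixes a b x y :: real
  assumes "0 \<le> a + b"
  shows "x\<^sup>2 + y\<^sup>2 \<le> a * b \<longleftrightarrow> norm (x, y, (a - b) / 2) \<le> (a + b) / 2"
proof -
  have "norm (x, y, (a - b) / 2) \<le> (a + b) / 2 \<longleftrightarrow>
      sqrt (x\<^sup>2 + (y\<^sup>2 + ((a - b) / 2)\<^sup>2)) \<le> (a + b) / 2"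
    by (simp add: norm_Pair power_divide)
  also have "\<dots> \<longleftrightarrow> x\<^sup>2 + (y\<^sup>2 + ((a - b) / 2)\<^sup>2) \<le> ((a + b) / 2)\<^sup>2"
    using assms by (intro real_sqrt_le_iff') auto
  also have "((a + b) / 2)\<^sup>2 = ((a - b) / 2)\<^sup>2 + a * b"
    by (simp add: power2_eq_square field_simps)
  finally show ?thesis by auto
qed

lemma convex_norm_le_linear:
  fixes L :: "'a::real_vector \<Rightarrow> 'b::real_normed_vector"
  assumes "linear L" "linear M"
  shows "convex {z. norm (L z) \<le> M z}"
proof (rule convexI)
  fix p q and u v :: real
  assume "p \<in> {z. norm (L z) \<le> M z}" "q \<in> {z. norm (L z) \<le> M z}" "0 \<le> u" "0 \<le> v"
  then have "norm (u *\<^sub>R L p + v *\<^sub>R L q) \<le> u * norm (L p) + v * norm (L q)"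
    using norm_triangle_ineq[of "u *\<^sub>R L p" "v *\<^sub>R L q"] by simp
  also have "\<dots> \<le> u * M p + v * M q"
    using \<open>p \<in> _\<close> \<open>q \<in> _\<close> \<open>0 \<le> u\<close> \<open>0 \<le> v\<close> by (auto intro!: add_mono mult_left_mono)
  finally have "norm (u *\<^sub>R L p + v *\<^sub>R L q) \<le> u * M p + v * M q" .
  then show "u *\<^sub>R p + v *\<^sub>R q \<in> {z. norm (L z) \<le> M z}"
    using assms by (simp add: linear_add linear_scale)
qed

lemma convex_Kle:
  assumes "0 \<le> l1" "0 \<le> l2"
  shows "convex (Kle l1 u1 l2 u2 l3 u3 l4 u4)"
proof -
  define L :: "pt4 \<Rightarrow> real \<times> real \<times> real" where "L = (\<lambda>(a, b, x, y). (x, y, (a - b) / 2))"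
  define M :: "pt4 \<Rightarrow> real" where "M = (\<lambda>(a, b, x, y). (a + b) / 2)"
  have "linear L" "linear M"
    by (auto simp: L_def M_def linear_iff algebra_simps add_divide_distrib diff_divide_distrib)
  moreover have "Kle l1 u1 l2 u2 l3 u3 l4 u4 = box4 l1 u1 l2 u2 l3 u3 l4 u4 \<inter> {z. norm (L z) \<le> M z}"
  proof (intro set_eqI)
    fix z :: pt4
    obtain a b x y where z: "z = (a, b, x, y)" by (cases z)
    show "z \<in> Kle l1 u1 l2 u2 l3 u3 l4 u4 \<longleftrightarrow> z \<in> box4 l1 u1 l2 u2 l3 u3 l4 u4 \<inter> {z. norm (L z) \<le> M z}"
      using assms sum_squares_le_mult_iff_norm[of a b x y]
      by (auto simp: Kle_def box4_def z L_def M_def)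
  qed
  ultimately show ?thesis
    by (simp add: convex_Int convex_box4 convex_norm_le_linear)
qed

text \<open>If \<open>g\<close> is replaced by \<open>z + t\<^sub>g (g - z)\<close>, the weights \<open>u\<^sub>g / t\<^sub>g\<close> of \<open>z = \<Sum> u\<^sub>g g\<close> still
  produce a multiple \<open>W z\<close> with \<open>W \<ge> 1\<close>; normalising them gives a convex combination.\<close>
lemma in_convex_hull_if_radial_points:
  fixes z :: "'a::real_vector"
  assumes "z \<in> convex hull S"
    and radial: "\<And>g. g \<in> S \<Longrightarrow> \<exists>t. 0 < t \<and> t \<le> 1 \<and> z + t *\<^sub>R (g - z) \<in> T"
  shows "z \<in> convex hull T"
proof -
  obtain F u where F: "finite F" "F \<subseteq> S" and u: "\<forall>g\<in>F. 0 \<le> u g" "sum u F = 1"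
    and z: "(\<Sum>g\<in>F. u g *\<^sub>R g) = z"
    using assms(1) unfolding convex_hull_explicit by blast
  have choice: "\<forall>g\<in>F. \<exists>t. 0 < t \<and> t \<le> 1 \<and> z + t *\<^sub>R (g - z) \<in> T"
    using radial F(2) by blast
  obtain t where t: "\<And>g. g \<in> F \<Longrightarrow> 0 < t g \<and> t g \<le> 1 \<and> z + t g *\<^sub>R (g - z) \<in> T"
    using bchoice[OF choice] by metis
  define H where "H g = z + t g *\<^sub>R (g - z)" for g
  define w where "w g = u g / t g" for g
  have wt: "w g * t g = u g" if "g \<in> F" for g
    using t[OF that] by (simp add: w_def)
  have "sum u F \<le> sum w F"
  proof (rule sum_mono)
    fix g assume "g \<in> F"
    with t u(1) have "u g * t g \<le> u g" by (simp add: mult_left_le)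
    with t[OF \<open>g \<in> F\<close>] show "u g \<le> w g" by (simp add: w_def le_divide_eq)
  qed
  with u(2) have W: "1 \<le> sum w F" by simp
  have "(\<Sum>g\<in>F. w g *\<^sub>R H g) = (\<Sum>g\<in>F. w g *\<^sub>R z + (u g *\<^sub>R g - u g *\<^sub>R z))"
    by (intro sum.cong refl) (simp add: H_def scaleR_add_right wt scaleR_diff_right)
  also have "\<dots> = sum w F *\<^sub>R z"
    by (simp add: sum.distrib sum_subtractf scaleR_left.sum[symmetric] u(2) z)
  finally have weighted: "(\<Sum>g\<in>F. w g *\<^sub>R H g) = sum w F *\<^sub>R z" .
  have "(\<Sum>g\<in>F. (w g / sum w F) *\<^sub>R H g) = (1 / sum w F) *\<^sub>R (\<Sum>g\<in>F. w g *\<^sub>R H g)"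
    by (simp add: scaleR_right.sum)
  also have "\<dots> = z"
    using W by (simp add: weighted)
  finally have "(\<Sum>g\<in>F. (w g / sum w F) *\<^sub>R H g) = z" .
  moreover have "(\<Sum>g\<in>F. (w g / sum w F) *\<^sub>R H g) \<in> convex hull T"
  proof (rule convex_sum[OF F(1) convex_convex_hull])
    show "(\<Sum>g\<in>F. w g / sum w F) = 1"
      using W by (simp add: sum_divide_distrib[symmetric])
    show "0 \<le> w g / sum w F" "H g \<in> convex hull T" if "g \<in> F" for g
      using t[OF that] u(1) that W by (auto simp: w_def H_def intro: hull_inc)
  qed
  ultimately show ?thesis by simp
qed

lemma in_convex_hull_zero_set:
  fixes f :: "'a::real_normed_vector \<Rightarrow> real"
  assumes "convex D" "continuous_on D f" "z \<in> D" "f z \<le> 0"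
    and "z \<in> convex hull (D \<inter> {x. 0 \<le> f x})"
  shows "z \<in> convex hull (D \<inter> {x. f x = 0})"
proof (cases "f z = 0")
  case True
  with assms(3) show ?thesis by (intro hull_inc) simp
next
  case False
  with assms(4) have "f z < 0" by simp
  show ?thesis
  proof (rule in_convex_hull_if_radial_points[OF assms(5)])
    fix g assume g: "g \<in> D \<inter> {x. 0 \<le> f x}"
    have on_D: "z + t *\<^sub>R (g - z) \<in> D" if "0 \<le> t" "t \<le> 1" for t
      using convexD[OF assms(1) assms(3), of g "1 - t" t] g that by (simp add: algebra_simps)
    have "continuous_on {0..1} (\<lambda>t. f (z + t *\<^sub>R (g - z)))"
      using on_D by (intro continuous_on_compose2[OF assms(2)] continuous_intros) auto
    then obtain t where "0 \<le> t" "t \<le> 1" "f (z + t *\<^sub>R (g - z)) = 0"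
      using IVT'[of "\<lambda>t. f (z + t *\<^sub>R (g - z))" 0 0 1] \<open>f z < 0\<close> g by auto
    moreover have "t \<noteq> 0"
      using calculation \<open>f z < 0\<close> by auto
    ultimately show "\<exists>t. 0 < t \<and> t \<le> 1 \<and> z + t *\<^sub>R (g - z) \<in> D \<inter> {x. f x = 0}"
      using on_D by (intro exI[of _ t]) auto
  qed
qed

lemma convex_hull_Keq:
  assumes "0 \<le> l1" "0 \<le> l2"
  shows "convex hull (Keq l1 u1 l2 u2 l3 u3 l4 u4) =
    Kle l1 u1 l2 u2 l3 u3 l4 u4 \<inter> convex hull (box4 l1 u1 l2 u2 l3 u3 l4 u4 \<inter> Gset)"
proof
  have "convex hull (Keq l1 u1 l2 u2 l3 u3 l4 u4) \<subseteq> Kle l1 u1 l2 u2 l3 u3 l4 u4"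
    using convex_Kle[OF assms] by (rule hull_minimal[rotated]) (auto simp: Keq_def Kle_def)
  moreover have "convex hull (Keq l1 u1 l2 u2 l3 u3 l4 u4) \<subseteq>
      convex hull (box4 l1 u1 l2 u2 l3 u3 l4 u4 \<inter> Gset)"
    by (rule hull_mono) (auto simp: Keq_eq_quad Gset_eq_quad)
  ultimately show "convex hull (Keq l1 u1 l2 u2 l3 u3 l4 u4) \<subseteq>
      Kle l1 u1 l2 u2 l3 u3 l4 u4 \<inter> convex hull (box4 l1 u1 l2 u2 l3 u3 l4 u4 \<inter> Gset)"
    by blast
  show "Kle l1 u1 l2 u2 l3 u3 l4 u4 \<inter> convex hull (box4 l1 u1 l2 u2 l3 u3 l4 u4 \<inter> Gset) \<subseteq>
      convex hull (Keq l1 u1 l2 u2 l3 u3 l4 u4)"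
    unfolding Keq_eq_quad Kle_eq_quad Gset_eq_quad
    by (auto intro: in_convex_hull_zero_set convex_box4 continuous_on_quad)
qed

lemma not_extreme_point_if_line_inside:
  fixes p d :: "'a::real_vector"
  assumes "d \<noteq> 0" and "eventually (\<lambda>t. p + t *\<^sub>R d \<in> C) (nhds 0)"
  shows "\<not> p extreme_point_of C"
proof
  assume extreme: "p extreme_point_of C"
  obtain e where "e > 0" and line: "\<And>t. dist t 0 < e \<Longrightarrow> p + t *\<^sub>R d \<in> C"
    using assms(2) by (auto simp: eventually_nhds_metric)
  define q where "q = (e / 2) *\<^sub>R d"
  have "p - q \<in> C" "p + q \<in> C"
    using line[of "- e / 2"] line[of "e / 2"] \<open>e > 0\<close> by (simp_all add: q_def)
  moreover have "p - q \<noteq> p + q"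
  proof
    assume "p - q = p + q"
    then have "2 *\<^sub>R q = 0"
      by (metis add_diff_cancel_left' diff_add_cancel diff_self scaleR_2 add_diff_eq diff_diff_eq2)
    with \<open>d \<noteq> 0\<close> \<open>e > 0\<close> show False by (simp add: q_def)
  qed
  moreover have "p = midpoint (p - q) (p + q)"
    by (metis add_diff_cancel_left diff_eq_eq midpoint_eq_iff)
  ultimately show False
    using extreme midpoint_in_open_segment unfolding extreme_point_of_def by metis
qed

lemma finite_extreme_points_if_inj_linear:
  fixes C :: "'a::real_vector set" and h :: "'a \<Rightarrow> real"
  assumes "convex C" "linear h" "inj_on h C"
  shows "finite {x. x extreme_point_of C}"
proof -
  have "h x = Inf (h ` C) \<or> h x = Sup (h ` C)" if extreme: "x extreme_point_of C" for x
  proof (rule ccontr)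
    assume not_min_max: "\<not> (h x = Inf (h ` C) \<or> h x = Sup (h ` C))"
    have "x \<in> C"
      using extreme by (simp add: extreme_point_of_def)
    obtain y where "y \<in> C" "h y < h x"
      using not_min_max cInf_eq_minimum[of "h x" "h ` C"] \<open>x \<in> C\<close> by (force simp: not_le)
    obtain w where "w \<in> C" "h x < h w"
      using not_min_max cSup_eq_maximum[of "h x" "h ` C"] \<open>x \<in> C\<close> by (force simp: not_le)
    define s where "s = (h x - h y) / (h w - h y)"
    have s: "0 < s" "s < 1"
      using \<open>h y < h x\<close> \<open>h x < h w\<close> by (auto simp: s_def field_simps)
    have "h ((1 - s) *\<^sub>R y + s *\<^sub>R w) = h y + s * (h w - h y)"
      by (simp add: linear_add[OF assms(2)] linear_scale[OF assms(2)]) (simp add: algebra_simps)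
    also have "\<dots> = h x"
      using \<open>h y < h x\<close> \<open>h x < h w\<close> by (simp add: s_def)
    finally have "(1 - s) *\<^sub>R y + s *\<^sub>R w = x"
      using s \<open>x \<in> C\<close> \<open>y \<in> C\<close> \<open>w \<in> C\<close>
      by (intro inj_onD[OF assms(3)] convexD[OF assms(1)]) auto
    then have "x \<in> open_segment y w"
      using s \<open>h y < h x\<close> \<open>h x < h w\<close> by (auto simp: in_segment)
    with extreme \<open>y \<in> C\<close> \<open>w \<in> C\<close> show False
      by (auto simp: extreme_point_of_def)
  qed
  then have "{x. x extreme_point_of C} \<subseteq> h -` {Inf (h ` C), Sup (h ` C)} \<inter> C"
    by (auto simp: extreme_point_of_def)
  then show ?thesis
    by (rule finite_subset) (intro finite_vimage_IntI assms(3) finite.intros)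
qed

lemma eventually_affine_in_interval:
  fixes c d :: real
  assumes "c \<in> {l..u}" and "d \<noteq> 0 \<Longrightarrow> c \<in> {l<..<u}"
  shows "eventually (\<lambda>t. c + t * d \<in> {l..u}) (nhds 0)"
proof (cases "d = 0")
  case False
  have "((\<lambda>t. c + t * d) \<longlongrightarrow> c) (nhds 0)"
    by (auto intro!: tendsto_eq_intros filterlim_ident)
  then have "eventually (\<lambda>t. l < c + t * d) (nhds 0)" "eventually (\<lambda>t. c + t * d < u) (nhds 0)"
    using assms(2)[OF False] by (auto intro: order_tendstoD)
  then show ?thesis
    by eventually_elim auto
qed (use assms in simp)

lemma quad_add_scaleR:
  "quad ((a, b, x, y) + t *\<^sub>R (d1, d2, d3, d4)) =
     quad (a, b, x, y) + t * (2 * x * d3 + 2 * y * d4 - b * d1 - a * d2) + t\<^sup>2 * quad (d1, d2, d3, d4)"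
  by (simp add: power2_eq_square algebra_simps)

lemma quad_ascent_direction:
  fixes a b x y :: real
  assumes "0 \<le> a" "0 \<le> b"
    and "a \<in> {l1<..<u1} \<and> b \<in> {l2<..<u2} \<or> a \<in> {l1<..<u1} \<and> x \<in> {l3<..<u3} \<or>
      a \<in> {l1<..<u1} \<and> y \<in> {l4<..<u4} \<or> b \<in> {l2<..<u2} \<and> x \<in> {l3<..<u3} \<or>
      b \<in> {l2<..<u2} \<and> y \<in> {l4<..<u4} \<or> x \<in> {l3<..<u3} \<and> y \<in> {l4<..<u4}"
  shows "\<exists>d. d \<noteq> 0 \<and> (case d of (d1, d2, d3, d4) \<Rightarrow>
    (d1 \<noteq> 0 \<longrightarrow> a \<in> {l1<..<u1}) \<and> (d2 \<noteq> 0 \<longrightarrow> b \<in> {l2<..<u2}) \<and>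
    (d3 \<noteq> 0 \<longrightarrow> x \<in> {l3<..<u3}) \<and> (d4 \<noteq> 0 \<longrightarrow> y \<in> {l4<..<u4}) \<and>
    2 * x * d3 + 2 * y * d4 - b * d1 - a * d2 = 0 \<and> 0 \<le> quad d)"
proof -
  have along_a: ?thesis if "a \<in> {l1<..<u1}" "b = 0"
    using that by (intro exI[of _ "(1, 0, 0, 0)"]) (auto simp: zero_prod_def)
  have along_b: ?thesis if "b \<in> {l2<..<u2}" "a = 0"
    using that by (intro exI[of _ "(0, 1, 0, 0)"]) (auto simp: zero_prod_def)
  from assms(3) show ?thesis
  proof (elim disjE conjE)
    assume "a \<in> {l1<..<u1}" "b \<in> {l2<..<u2}"
    moreover have "0 \<le> a * b" using assms(1,2) by simp
    ultimately show ?thesis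
      by (cases "a = 0")
        (use along_b in blast, intro exI[of _ "(a, - b, 0, 0)"], auto simp: zero_prod_def)
  next
    assume "a \<in> {l1<..<u1}" "x \<in> {l3<..<u3}"
    then show ?thesis
      by (cases "b = 0")
        (use along_a in blast, intro exI[of _ "(2 * x, 0, b, 0)"], auto simp: zero_prod_def)
  next
    assume "a \<in> {l1<..<u1}" "y \<in> {l4<..<u4}"
    then show ?thesis
      by (cases "b = 0")
        (use along_a in blast, intro exI[of _ "(2 * y, 0, 0, b)"], auto simp: zero_prod_def)
  next
    assume "b \<in> {l2<..<u2}" "x \<in> {l3<..<u3}"
    then show ?thesis
      by (cases "a = 0")
        (use along_b in blast, intro exI[of _ "(0, 2 * x, a, 0)"], auto simp: zero_prod_def)
  next
    assume "b \<in> {l2<..<u2}" "y \<in> {l4<..<u4}"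
    then show ?thesis
      by (cases "a = 0")
        (use along_b in blast, intro exI[of _ "(0, 2 * y, 0, a)"], auto simp: zero_prod_def)
  next
    assume "x \<in> {l3<..<u3}" "y \<in> {l4<..<u4}"
    then show ?thesis
      by (cases "x = 0 \<and> y = 0")
        (intro exI[of _ "(0, 0, 1, 0)"], simp add: zero_prod_def,
         intro exI[of _ "(0, 0, - y, x)"], auto simp: zero_prod_def)
  qed
qed

lemma finite_image_set3:
  assumes "finite A" "finite B" "finite C"
  shows "finite {f a b c | a b c. a \<in> A \<and> b \<in> B \<and> c \<in> C}"
proof -
  have "{f a b c | a b c. a \<in> A \<and> b \<in> B \<and> c \<in> C} = (\<lambda>(a, b, c). f a b c) ` (A \<times> B \<times> C)"
    by force
  with assms show ?thesis by simp
qed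

lemma finite_edges4: "finite (edges4 l1 u1 l2 u2 l3 u3 l4 u4)"
  unfolding edges4_def by (intro finite_UnI finite_image_set3) simp_all

lemma edges4_subset_box4:
  assumes "l1 \<le> u1" "l2 \<le> u2" "l3 \<le> u3" "l4 \<le> u4" "E \<in> edges4 l1 u1 l2 u2 l3 u3 l4 u4"
  shows "E \<subseteq> box4 l1 u1 l2 u2 l3 u3 l4 u4"
  using assms by (auto simp: edges4_def box4_def)

lemma compact_edges4: "E \<in> edges4 l1 u1 l2 u2 l3 u3 l4 u4 \<Longrightarrow> compact E"
  by (auto simp: edges4_def intro!: compact_Times)

lemma convex_edges4: "E \<in> edges4 l1 u1 l2 u2 l3 u3 l4 u4 \<Longrightarrow> convex E"
  by (auto simp: edges4_def intro!: convex_Times)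

lemma edges4_inj_linear:
  assumes "E \<in> edges4 l1 u1 l2 u2 l3 u3 l4 u4"
  shows "\<exists>h :: pt4 \<Rightarrow> real. linear h \<and> inj_on h E"
  using assms unfolding edges4_def
proof (elim UnE CollectE exE conjE)
  fix b c d assume "E = {l1..u1} \<times> {b} \<times> {c} \<times> {d}"
  then show ?thesis
    by (intro exI[of _ fst]) (auto simp: inj_on_def linear_fst)
next
  fix a c d assume "E = {a} \<times> {l2..u2} \<times> {c} \<times> {d}"
  then show ?thesis
    by (intro exI[of _ "fst \<circ> snd"]) (auto simp: inj_on_def linear_fst linear_snd linear_compose)
next
  fix a b d assume "E = {a} \<times> {b} \<times> {l3..u3} \<times> {d}"
  then show ?thesis
    by (intro exI[of _ "fst \<circ> snd \<circ> snd"]) (auto simp: inj_on_def linear_fst linear_snd linear_compose)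
next
  fix a b c assume "E = {a} \<times> {b} \<times> {c} \<times> {l4..u4}"
  then show ?thesis
    by (intro exI[of _ "snd \<circ> snd \<circ> snd"]) (auto simp: inj_on_def linear_snd linear_compose)
qed

lemma box4_point_on_edge:
  assumes "(a, b, x, y) \<in> box4 l1 u1 l2 u2 l3 u3 l4 u4"
    and "\<not> (a \<in> {l1<..<u1} \<and> b \<in> {l2<..<u2} \<or> a \<in> {l1<..<u1} \<and> x \<in> {l3<..<u3} \<or>
      a \<in> {l1<..<u1} \<and> y \<in> {l4<..<u4} \<or> b \<in> {l2<..<u2} \<and> x \<in> {l3<..<u3} \<or>
      b \<in> {l2<..<u2} \<and> y \<in> {l4<..<u4} \<or> x \<in> {l3<..<u3} \<and> y \<in> {l4<..<u4})"
  shows "\<exists>E \<in> edges4 l1 u1 l2 u2 l3 u3 l4 u4. (a, b, x, y) \<in> E"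
proof -
  let ?E = "edges4 l1 u1 l2 u2 l3 u3 l4 u4"
  have ranges: "a \<notin> {l1<..<u1} \<Longrightarrow> a \<in> {l1, u1}" "b \<notin> {l2<..<u2} \<Longrightarrow> b \<in> {l2, u2}"
      "x \<notin> {l3<..<u3} \<Longrightarrow> x \<in> {l3, u3}" "y \<notin> {l4<..<u4} \<Longrightarrow> y \<in> {l4, u4}"
    using assms(1) by (auto simp: box4_def)
  have on_lines: "(a, b, x, y) \<in> {l1..u1} \<times> {b} \<times> {x} \<times> {y}"
      "(a, b, x, y) \<in> {a} \<times> {l2..u2} \<times> {x} \<times> {y}"
      "(a, b, x, y) \<in> {a} \<times> {b} \<times> {l3..u3} \<times> {y}"
      "(a, b, x, y) \<in> {a} \<times> {b} \<times> {x} \<times> {l4..u4}"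
    using assms(1) by (auto simp: box4_def)
  have edges: "b \<in> {l2, u2} \<Longrightarrow> x \<in> {l3, u3} \<Longrightarrow> y \<in> {l4, u4} \<Longrightarrow> {l1..u1} \<times> {b} \<times> {x} \<times> {y} \<in> ?E"
    "a \<in> {l1, u1} \<Longrightarrow> x \<in> {l3, u3} \<Longrightarrow> y \<in> {l4, u4} \<Longrightarrow> {a} \<times> {l2..u2} \<times> {x} \<times> {y} \<in> ?E"
    "a \<in> {l1, u1} \<Longrightarrow> b \<in> {l2, u2} \<Longrightarrow> y \<in> {l4, u4} \<Longrightarrow> {a} \<times> {b} \<times> {l3..u3} \<times> {y} \<in> ?E"
    "a \<in> {l1, u1} \<Longrightarrow> b \<in> {l2, u2} \<Longrightarrow> x \<in> {l3, u3} \<Longrightarrow> {a} \<times> {b} \<times> {x} \<times> {l4..u4} \<in> ?E"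
    unfolding edges4_def by blast+
  consider "a \<in> {l1<..<u1}" | "a \<notin> {l1<..<u1}" "b \<in> {l2<..<u2}"
    | "a \<notin> {l1<..<u1}" "b \<notin> {l2<..<u2}" "x \<in> {l3<..<u3}"
    | "a \<notin> {l1<..<u1}" "b \<notin> {l2<..<u2}" "x \<notin> {l3<..<u3}"
    by blast
  then show ?thesis
  proof cases
    case 1
    with assms(2) ranges have "b \<in> {l2, u2}" "x \<in> {l3, u3}" "y \<in> {l4, u4}" by simp_all
    then have "{l1..u1} \<times> {b} \<times> {x} \<times> {y} \<in> ?E" by (rule edges(1))
    with on_lines(1) show ?thesis ..
  next
    case 2
    with assms(2) ranges have "a \<in> {l1, u1}" "x \<in> {l3, u3}" "y \<in> {l4, u4}" by simp_all
    then have "{a} \<times> {l2..u2} \<times> {x} \<times> {y} \<in> ?E" by (rule edges(2))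
    with on_lines(2) show ?thesis ..
  next
    case 3
    with assms(2) ranges have "a \<in> {l1, u1}" "b \<in> {l2, u2}" "y \<in> {l4, u4}" by simp_all
    then have "{a} \<times> {b} \<times> {l3..u3} \<times> {y} \<in> ?E" by (rule edges(3))
    with on_lines(3) show ?thesis ..
  next
    case 4
    then have "{a} \<times> {b} \<times> {x} \<times> {l4..u4} \<in> ?E" using ranges by (intro edges(4)) simp_all
    with on_lines(4) show ?thesis ..
  qed
qed

lemma extreme_point_of_hull_box4_Gset_on_edge:
  assumes "0 \<le> l1" "0 \<le> l2"
    and extreme: "p extreme_point_of convex hull (box4 l1 u1 l2 u2 l3 u3 l4 u4 \<inter> Gset)"
  shows "\<exists>E \<in> edges4 l1 u1 l2 u2 l3 u3 l4 u4. p \<in> E"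
proof -
  let ?D = "box4 l1 u1 l2 u2 l3 u3 l4 u4"
  obtain a b x y where p: "p = (a, b, x, y)" by (cases p)
  have "p \<in> ?D \<inter> Gset"
    using extreme by (rule extreme_point_of_convex_hull)
  then have box: "(a, b, x, y) \<in> ?D" and "0 \<le> quad p"
    by (auto simp: p Gset_eq_quad)
  have "\<not> (a \<in> {l1<..<u1} \<and> b \<in> {l2<..<u2} \<or> a \<in> {l1<..<u1} \<and> x \<in> {l3<..<u3} \<or>
      a \<in> {l1<..<u1} \<and> y \<in> {l4<..<u4} \<or> b \<in> {l2<..<u2} \<and> x \<in> {l3<..<u3} \<or>
      b \<in> {l2<..<u2} \<and> y \<in> {l4<..<u4} \<or> x \<in> {l3<..<u3} \<and> y \<in> {l4<..<u4})"
  proof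
    assume two_interior: "a \<in> {l1<..<u1} \<and> b \<in> {l2<..<u2} \<or> a \<in> {l1<..<u1} \<and> x \<in> {l3<..<u3} \<or>
      a \<in> {l1<..<u1} \<and> y \<in> {l4<..<u4} \<or> b \<in> {l2<..<u2} \<and> x \<in> {l3<..<u3} \<or>
      b \<in> {l2<..<u2} \<and> y \<in> {l4<..<u4} \<or> x \<in> {l3<..<u3} \<and> y \<in> {l4<..<u4}"
    have "0 \<le> a" "0 \<le> b"
      using box assms(1,2) by (auto simp: box4_def)
    from quad_ascent_direction[OF this two_interior]
    obtain d1 d2 d3 d4 where nonzero: "(d1, d2, d3, d4) \<noteq> 0"
      and free: "d1 \<noteq> 0 \<Longrightarrow> a \<in> {l1<..<u1}" "d2 \<noteq> 0 \<Longrightarrow> b \<in> {l2<..<u2}"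
        "d3 \<noteq> 0 \<Longrightarrow> x \<in> {l3<..<u3}" "d4 \<noteq> 0 \<Longrightarrow> y \<in> {l4<..<u4}"
      and tangent: "2 * x * d3 + 2 * y * d4 - b * d1 - a * d2 = 0"
      and ascent: "0 \<le> quad (d1, d2, d3, d4)"
      by force
    have "eventually (\<lambda>t. a + t * d1 \<in> {l1..u1} \<and> b + t * d2 \<in> {l2..u2} \<and>
        x + t * d3 \<in> {l3..u3} \<and> y + t * d4 \<in> {l4..u4}) (nhds 0)"
      using box free by (intro eventually_conj eventually_affine_in_interval) (auto simp: box4_def)
    then have "eventually (\<lambda>t. p + t *\<^sub>R (d1, d2, d3, d4) \<in> convex hull (?D \<inter> Gset)) (nhds 0)"
    proof (rule eventually_mono)
      fix t
      assume "a + t * d1 \<in> {l1..u1} \<and> b + t * d2 \<in> {l2..u2} \<and>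
        x + t * d3 \<in> {l3..u3} \<and> y + t * d4 \<in> {l4..u4}"
      moreover have "0 \<le> quad (p + t *\<^sub>R (d1, d2, d3, d4))"
        using \<open>0 \<le> quad p\<close> ascent by (simp only: p quad_add_scaleR tangent) simp
      ultimately show "p + t *\<^sub>R (d1, d2, d3, d4) \<in> convex hull (?D \<inter> Gset)"
        by (intro hull_inc) (simp add: p box4_def Gset_eq_quad)
    qed
    with nonzero have "\<not> p extreme_point_of convex hull (?D \<inter> Gset)"
      by (rule not_extreme_point_if_line_inside)
    with extreme show False by contradiction
  qed
  with box show ?thesis
    unfolding p by (rule box4_point_on_edge)
qed

lemma finite_extreme_points_hull_edges4_Gset:
  assumes "E \<in> edges4 l1 u1 l2 u2 l3 u3 l4 u4"
  shows "finite {z. z extreme_point_of convex hull (E \<inter> Gset)}"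
proof -
  obtain h :: "pt4 \<Rightarrow> real" where "linear h" "inj_on h E"
    using edges4_inj_linear[OF assms] by blast
  moreover have "convex hull (E \<inter> Gset) \<subseteq> E"
    using convex_edges4[OF assms] by (intro hull_minimal) auto
  ultimately show ?thesis
    by (intro finite_extreme_points_if_inj_linear convex_convex_hull) (auto intro: inj_on_subset)
qed

lemma finite_Vset: "finite (Vset l1 u1 l2 u2 l3 u3 l4 u4)"
proof -
  have "Vset l1 u1 l2 u2 l3 u3 l4 u4 =
      (\<Union>E \<in> edges4 l1 u1 l2 u2 l3 u3 l4 u4. {z. z extreme_point_of convex hull (E \<inter> Gset)})"
    by (auto simp: Vset_def)
  then show ?thesis
    by (simp add: finite_edges4 finite_extreme_points_hull_edges4_Gset)
qed

lemma convex_hull_Vset: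
  assumes "0 \<le> l1" "l1 \<le> u1" "0 \<le> l2" "l2 \<le> u2" "l3 \<le> u3" "l4 \<le> u4"
  shows "convex hull (Vset l1 u1 l2 u2 l3 u3 l4 u4) = convex hull (box4 l1 u1 l2 u2 l3 u3 l4 u4 \<inter> Gset)"
proof
  let ?D = "box4 l1 u1 l2 u2 l3 u3 l4 u4" and ?V = "Vset l1 u1 l2 u2 l3 u3 l4 u4"
  have "?V \<subseteq> ?D \<inter> Gset"
  proof
    fix v assume "v \<in> ?V"
    then obtain E where E: "E \<in> edges4 l1 u1 l2 u2 l3 u3 l4 u4"
      and v: "v extreme_point_of convex hull (E \<inter> Gset)"
      by (auto simp: Vset_def)
    from v have "v \<in> E \<inter> Gset"
      by (rule extreme_point_of_convex_hull)
    with edges4_subset_box4[OF assms(2,4-6) E] show "v \<in> ?D \<inter> Gset" by blast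
  qed
  then show "convex hull ?V \<subseteq> convex hull (?D \<inter> Gset)"
    by (rule hull_mono)
next
  let ?D = "box4 l1 u1 l2 u2 l3 u3 l4 u4" and ?V = "Vset l1 u1 l2 u2 l3 u3 l4 u4"
  have extreme_in_hull: "p \<in> convex hull ?V" if p: "p extreme_point_of convex hull (?D \<inter> Gset)" for p
  proof -
    obtain E where E: "E \<in> edges4 l1 u1 l2 u2 l3 u3 l4 u4" "p \<in> E"
      using extreme_point_of_hull_box4_Gset_on_edge[OF assms(1,3) p] by blast
    have "p \<in> Gset"
      using extreme_point_of_convex_hull[OF p] by blast
    with E have "p \<in> convex hull (E \<inter> Gset)"
      by (intro hull_inc) blast
    also have "\<dots> = convex hull {z. z extreme_point_of convex hull (E \<inter> Gset)}"
      using compact_edges4[OF E(1)]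
      by (intro Krein_Milman_Minkowski compact_convex_hull compact_Int_closed closed_Gset convex_convex_hull)
    also have "\<dots> \<subseteq> convex hull ?V"
      using E(1) by (intro hull_mono) (auto simp: Vset_def)
    finally show ?thesis .
  qed
  have "convex hull (?D \<inter> Gset) = convex hull {p. p extreme_point_of convex hull (?D \<inter> Gset)}"
    by (intro Krein_Milman_Minkowski compact_convex_hull compact_Int_closed compact_box4 closed_Gset
        convex_convex_hull)
  also have "\<dots> \<subseteq> convex hull ?V"
    using extreme_in_hull by (intro hull_minimal) (auto simp: convex_convex_hull)
  finally show "convex hull (?D \<inter> Gset) \<subseteq> convex hull ?V" .
qed

theorem proposition2:
  fixes l1 u1 l2 u2 l3 u3 l4 u4 :: real
  assumes "0 \<le> l1" "l1 < u1" "0 \<le> l2" "l2 < u2" "l3 < u3" "l4 < u4"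
  defines "V \<equiv> Vset l1 u1 l2 u2 l3 u3 l4 u4"
  shows "finite V \<and>
         convex hull (Keq l1 u1 l2 u2 l3 u3 l4 u4) = Kle l1 u1 l2 u2 l3 u3 l4 u4 \<inter> convex hull V \<and>
         Kle l1 u1 l2 u2 l3 u3 l4 u4 \<inter> convex hull V =
           {z \<in> box4 l1 u1 l2 u2 l3 u3 l4 u4.
              \<exists>lam :: pt4 \<Rightarrow> real. (\<forall>v \<in> V. lam v \<ge> 0) \<and>
                 (case z of (cii, cjj, cij, sij) \<Rightarrow> cij\<^sup>2 + sij\<^sup>2 \<le> cii * cjj) \<and>
                 z = (\<Sum>v \<in> V. lam v *\<^sub>R v) \<and> (\<Sum>v \<in> V. lam v) = 1}"
proof (intro conjI)
  show "finite V"
    unfolding V_def by (rule finite_Vset)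
  have "convex hull V = convex hull (box4 l1 u1 l2 u2 l3 u3 l4 u4 \<inter> Gset)"
    unfolding V_def using assms by (intro convex_hull_Vset) auto
  then show "convex hull (Keq l1 u1 l2 u2 l3 u3 l4 u4) = Kle l1 u1 l2 u2 l3 u3 l4 u4 \<inter> convex hull V"
    using convex_hull_Keq[OF assms(1,3)] by simp
  show "Kle l1 u1 l2 u2 l3 u3 l4 u4 \<inter> convex hull V = {z \<in> box4 l1 u1 l2 u2 l3 u3 l4 u4.
      \<exists>lam. (\<forall>v \<in> V. lam v \<ge> 0) \<and> (case z of (cii, cjj, cij, sij) \<Rightarrow> cij\<^sup>2 + sij\<^sup>2 \<le> cii * cjj) \<and>
      z = (\<Sum>v \<in> V. lam v *\<^sub>R v) \<and> (\<Sum>v \<in> V. lam v) = 1}"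
    unfolding convex_hull_finite[OF \<open>finite V\<close>] Kle_def by auto
qed

end
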